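(* Let $k$ be an odd positive integer and $\mu, n$ positive integers with $2\mu$ and $n$ coprime, and suppose there is an integer $s$ with \[ k^4\mu^4 n^4 - 16k(4\mu^2+n^2) = s^2. \] Then $(k, \mu, n) = (5, 1, 1)$. *)

theory Defs
  imports Main
begin

end

theory Submission
  imports Defs
begin

(*
  The hypothesis says that the discriminant of z^2 - k^2 \<mu>^2 n^2 z + 4 k (4 \<mu>^2 + n^2) is a
  square, so this quadratic has an integer root a with 0 < a \<le> k^2 \<mu>^2 n^2 / 2. The other root
  is at least half their sum, so a k^2 \<mu>^2 n^2 \<le> 2 * 4 k (4 \<mu>^2 + n^2), whence a k \<le> 40.
  Multiplying the root equation by a gives (a k \<mu>^2 - 4) (a k n^2 - 16) = a^3 + 64, which bounds
  \<mu> and n in terms of a; a finite search shows that for odd k its only solution is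
  a = k = 5, \<mu> = n = 1.
*)

lemma quadratic_root_of_square_discriminant:
  fixes A m t :: int
  assumes disc: "A^2 - 4 * m = t^2" and "A > 0" and "m > 0"
  shows "\<exists>a. 0 < a \<and> 2 * a \<le> A \<and> a * (A - a) = m"
proof -
  define r where "r = \<bar>t\<bar>"
  have r_sq: "A^2 - 4 * m = r^2" and "r \<ge> 0"
    using disc by (auto simp: r_def)
  have "r < A"
  proof (rule ccontr)
    assume "\<not> r < A"
    then have "A^2 \<le> r^2" using \<open>A > 0\<close> by (simp add: power_mono)
    then show False using r_sq \<open>m > 0\<close> by linarith
  qed
  have "even (A - r)"
  proof -
    have "(A - r) * (A + r) = 2 * (2 * m)"
      using r_sq by (simp add: algebra_simps power2_eq_square)
    moreover have "A + r = (A - r) + 2 * r" by simp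
    ultimately show ?thesis by (metis even_add even_mult_iff dvd_triv_left)
  qed
  then obtain a where a: "A - r = 2 * a" by blast
  have "a * (A - a) = m"
  proof -
    have "4 * (a * (A - a)) = (A - r) * (A + r)" using a by (simp add: algebra_simps)
    also have "\<dots> = 4 * m" using r_sq by (simp add: algebra_simps power2_eq_square)
    finally show ?thesis by simp
  qed
  moreover have "0 < a" and "2 * a \<le> A" using a \<open>r < A\<close> \<open>r \<ge> 0\<close> by linarith+
  ultimately show ?thesis by blast
qed

lemma small_root_bound:
  fixes a k x y :: int
  assumes root: "a * (k^2 * x * y - a) = 4 * k * (4 * x + y)"
    and "0 < a" and "2 * a \<le> k^2 * x * y" and "0 < k" and "1 \<le> x" and "1 \<le> y"
  shows "a * k \<le> 40"
proof -
  have "a * (k^2 * x * y) \<le> 2 * (a * (k^2 * x * y - a))"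
    using \<open>0 < a\<close> \<open>2 * a \<le> k^2 * x * y\<close> by (simp add: algebra_simps mult_left_mono)
  then have "k * ((a * k) * (x * y)) \<le> k * (32 * x + 8 * y)"
    using root by (simp add: algebra_simps power2_eq_square)
  then have "(a * k) * (x * y) \<le> 32 * x + 8 * y"
    using \<open>0 < k\<close> by simp
  also have "\<dots> \<le> 40 * (x * y)"
    using \<open>1 \<le> x\<close> \<open>1 \<le> y\<close> mult_left_mono[of 1 y x] mult_right_mono[of 1 x y] by linarith
  finally show ?thesis
    using \<open>1 \<le> x\<close> \<open>1 \<le> y\<close> by (simp add: mult_le_cancel_right)
qed

lemma root_equation_factorization:
  fixes a k x y :: int
  assumes "a * (k^2 * x * y - a) = 4 * k * (4 * x + y)"
  shows "(a * k * x - 4) * (a * k * y - 16) = a^3 + 64"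
proof -
  have "a * (a * (k^2 * x * y - a)) = a * (4 * k * (4 * x + y))"
    using assms by simp
  then show ?thesis by (simp add: algebra_simps power2_eq_square power3_eq_cube)
qed

lemma factorization_search:
  "\<forall>a\<in>{1..40::int}. \<forall>k\<in>{1..40}. odd k \<longrightarrow> a * k \<le> 40 \<longrightarrow>
   (\<forall>m\<in>{1..40}. (a * k * m^2 - 4) dvd (a^3 + 64) \<longrightarrow>
    (\<forall>n\<in>{1..40}. (a * k * m^2 - 4) * (a * k * n^2 - 16) = a^3 + 64 \<longrightarrow>
       (a, k, m, n) = (5, 5, 1, 1)))"
proof -
  \<comment> \<open>The guards are \<open>if\<close>s rather than implications so that \<open>code_simp\<close> never evaluates
    the inner loops of pruned branches.\<close>
  have "list_all (\<lambda>a::int. list_all (\<lambda>k. if odd k \<and> a * k \<le> 40 then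
     list_all (\<lambda>m. if (a * k * m^2 - 4) dvd (a^3 + 64) then
       list_all (\<lambda>n. (a * k * m^2 - 4) * (a * k * n^2 - 16) = a^3 + 64
                     \<longrightarrow> (a, k, m, n) = (5, 5, 1, 1)) [1..40]
     else True) [1..40]
   else True) [1..40]) [1..40]"
    by code_simp
  then show ?thesis by (simp only: list_all_iff set_upto if_bool_eq_conj) blast
qed

lemma factorization_factors_pos:
  fixes a k m n :: int
  assumes "0 < a" and "0 < k" and "0 < m" and "0 < n"
    and eq: "(a * k * m^2 - 4) * (a * k * n^2 - 16) = a^3 + 64"
  shows "4 < a * k * m^2" and "16 < a * k * n^2"
proof -
  have "a * (k * (a * k * m^2 * n^2 - 16 * m^2 - 4 * n^2)) = a * a^2"
    using eq by (simp add: algebra_simps power2_eq_square power3_eq_cube)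
  then have "k * (a * k * m^2 * n^2 - 16 * m^2 - 4 * n^2) = a^2"
    using \<open>0 < a\<close> by simp
  then have "0 < k * (a * k * m^2 * n^2 - 16 * m^2 - 4 * n^2)"
    using \<open>0 < a\<close> by simp
  then have "16 * m^2 + 4 * n^2 < a * k * m^2 * n^2"
    using \<open>0 < k\<close> by (simp add: zero_less_mult_iff)
  moreover have "a * k * n^2 * m^2 = a * k * m^2 * n^2" by (simp add: mult_ac)
  moreover have "0 < m^2" and "0 < n^2" using \<open>0 < m\<close> \<open>0 < n\<close> by simp_all
  ultimately have "4 * n^2 < a * k * m^2 * n^2" and "16 * m^2 < a * k * n^2 * m^2"
    by linarith+
  then show "4 < a * k * m^2" and "16 < a * k * n^2"
    by (simp_all add: mult_less_cancel_right)
qed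

lemma factorization_solution:
  fixes a k m n :: int
  assumes "0 < a" and "0 < k" and "odd k" and "a * k \<le> 40" and "0 < m" and "0 < n"
    and eq: "(a * k * m^2 - 4) * (a * k * n^2 - 16) = a^3 + 64"
  shows "a = 5 \<and> k = 5 \<and> m = 1 \<and> n = 1"
proof -
  have "a \<le> a * k" and "k \<le> a * k"
    using \<open>0 < a\<close> \<open>0 < k\<close> by (simp_all add: mult_le_cancel_left1 mult_le_cancel_right1)
  then have "a \<le> 40" and "k \<le> 40" using \<open>a * k \<le> 40\<close> by linarith+
  have at_most_40: "v \<le> 40" if "a * v^2 \<le> a^3 + 80" for v :: int
  proof (rule ccontr)
    assume "\<not> v \<le> 40"
    then have "1681 \<le> v^2" using power_mono[of 41 v 2] by simp
    then have "a * 1681 \<le> a * v^2" using \<open>0 < a\<close> by (intro mult_left_mono) auto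
    moreover have "a^3 \<le> 1600 * a"
      using \<open>a \<le> 40\<close> \<open>0 < a\<close> power_mono[of a 40 2]
      by (simp add: power3_eq_cube power2_eq_square mult_right_mono)
    ultimately show False using that \<open>0 < a\<close> by linarith
  qed
  have "1 \<le> a * k * m^2 - 4" and "1 \<le> a * k * n^2 - 16"
    using factorization_factors_pos[OF \<open>0 < a\<close> \<open>0 < k\<close> \<open>0 < m\<close> \<open>0 < n\<close> eq] by simp_all
  then have "a * k * m^2 - 4 \<le> a^3 + 64" and "a * k * n^2 - 16 \<le> a^3 + 64"
    using eq mult_left_mono[of 1 "a * k * n^2 - 16" "a * k * m^2 - 4"]
      mult_right_mono[of 1 "a * k * m^2 - 4" "a * k * n^2 - 16"] by simp_all
  moreover have "a * m^2 \<le> a * k * m^2" and "a * n^2 \<le> a * k * n^2"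
    using \<open>a \<le> a * k\<close> by (simp_all add: mult_right_mono)
  ultimately have "m \<le> 40" and "n \<le> 40" using at_most_40 by auto
  moreover have "(a * k * m^2 - 4) dvd (a^3 + 64)" using eq by (metis dvd_triv_left)
  moreover have "a \<in> {1..40}" and "k \<in> {1..40}" and "m \<in> {1..40}" and "n \<in> {1..40}"
    using \<open>0 < a\<close> \<open>a \<le> 40\<close> \<open>0 < k\<close> \<open>k \<le> 40\<close>
      \<open>0 < m\<close> \<open>m \<le> 40\<close> \<open>0 < n\<close> \<open>n \<le> 40\<close> by simp_all
  ultimately have "(a, k, m, n) = (5, 5, 1, 1)"
    using factorization_search \<open>odd k\<close> \<open>a * k \<le> 40\<close> eq by blast
  then show ?thesis by simp
qed

theorem theorem8:
  fixes k \<mu> n s :: int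
  assumes "k > 0" and "odd k" and "\<mu> > 0" and "n > 0"
    and "coprime (2 * \<mu>) n"
    and "k^4 * \<mu>^4 * n^4 - 16 * k * (4 * \<mu>^2 + n^2) = s^2"
  shows "k = 5 \<and> \<mu> = 1 \<and> n = 1"
proof -
  have "(k^2 * \<mu>^2 * n^2)^2 - 4 * (4 * k * (4 * \<mu>^2 + n^2)) = s^2"
    using assms(6) by (simp add: power_mult_distrib flip: power_mult)
  moreover have "k^2 * \<mu>^2 * n^2 > 0" and "4 * k * (4 * \<mu>^2 + n^2) > 0"
    using assms(1,3,4) by (simp_all add: add_pos_pos)
  ultimately obtain a where "0 < a" and "2 * a \<le> k^2 * \<mu>^2 * n^2"
    and root: "a * (k^2 * \<mu>^2 * n^2 - a) = 4 * k * (4 * \<mu>^2 + n^2)"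
    using quadratic_root_of_square_discriminant by blast
  moreover have "1 \<le> \<mu>^2" and "1 \<le> n^2"
    using assms(3,4) by (simp_all add: one_le_power)
  ultimately have "a * k \<le> 40"
    using small_root_bound assms(1) by blast
  moreover have "(a * k * \<mu>^2 - 4) * (a * k * n^2 - 16) = a^3 + 64"
    using root by (rule root_equation_factorization)
  ultimately show ?thesis
    using factorization_solution \<open>0 < a\<close> assms(1-4) by blast
qed

end
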